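(* Let $\lambda>0$, $L>0$, $1\le m\le d$, and let $\boldsymbol{x}_1,\ldots,\boldsymbol{x}_t\in\mathbb{R}^d$ satisfy $\|\boldsymbol{x}_s\|\le L$. With $\boldsymbol{V}_t=\boldsymbol{X}_t^\top\boldsymbol{X}_t+\lambda\boldsymbol{I}$ and $\bar\rho_t$ from the FD sketch of size $m$ of $\boldsymbol{x}_1,\ldots,\boldsymbol{x}_t$, $$\ln\frac{\det(\boldsymbol{V}_t)}{\det(\lambda\boldsymbol{I})}\le d\ln\Big(1+\frac{\bar\rho_t}{\lambda}\Big)+m\ln\Big(1+\frac{tL^2}{m\lambda}\Big).$$
   Context: $\boldsymbol{X}_t$ is the $t\times d$ matrix with rows $\boldsymbol{x}_1^\top,\ldots,\boldsymbol{x}_t^\top$. Frequent Directions (FD) sketch of size $m$ ($1\le m\le d$) of a sequence $\boldsymbol{x}_1,\boldsymbol{x}_2,\ldots\in\mathbb{R}^d$: set $\boldsymbol{S}_0=\boldsymbol{0}\in\mathbb{R}^{m\times d}$. For $s\ge1$ let $\boldsymbol{A}_s=\boldsymbol{S}_{s-1}^\top\boldsymbol{S}_{s-1}+\boldsymbol{x}_s\boldsymbol{x}_s^\top$, let $\sigma_1\ge\cdots\ge\sigma_d\ge0$ be its eigenvalues with orthonormal eigenvectors $\boldsymbol{u}_1,\ldots,\boldsymbol{u}_d$, set $\rho_s=\sigma_m$, and let $\boldsymbol{S}_s\in\mathbb{R}^{m\times d}$ have $i$-th row $\sqrt{\sigma_i-\rho_s}\,\boldsymbol{u}_i^\top$ ($i=1,\ldots,m$).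 Define $\bar\rho_t=\rho_1+\cdots+\rho_t$ ($\bar\rho_0=0$). *)

theory Defs
  imports "HOL-Analysis.Analysis"
begin

definition outer :: "real^'d \<Rightarrow> real^'d \<Rightarrow> real^'d^'d" where
  "outer x y = (\<chi> i j. x $ i * y $ j)"

text \<open>A sketch matrix S (m x d) is represented by its rows S 1, ..., S m.
  Its Gram matrix S^T S is the sum of the outer products of its rows.\<close>
definition gram :: "nat \<Rightarrow> (nat \<Rightarrow> real^'d) \<Rightarrow> real^'d^'d" where
  "gram m S = (\<Sum>i\<in>{1..m}. outer (S i) (S i))"

definition fd_step :: "nat \<Rightarrow> (nat \<Rightarrow> real^'d) \<Rightarrow> real^'d \<Rightarrow> (nat \<Rightarrow> real^'d) \<Rightarrow> real \<Rightarrow> bool" where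
  "fd_step m Sp x S rho \<longleftrightarrow>
     (\<exists>(\<sigma>::nat \<Rightarrow> real) (u::nat \<Rightarrow> real^'d).
        (\<forall>i\<in>{1..CARD('d)}. \<forall>j\<in>{1..CARD('d)}. u i \<bullet> u j = (if i = j then 1 else 0)) \<and>
        (\<forall>i\<in>{1..CARD('d)}. (gram m Sp + outer x x) *v u i = \<sigma> i *\<^sub>R u i) \<and>
        (\<forall>i\<in>{1..CARD('d)}. \<forall>j\<in>{1..CARD('d)}. i \<le> j \<longrightarrow> \<sigma> j \<le> \<sigma> i) \<and>
        rho = \<sigma> m \<and>
        (\<forall>i\<in>{1..m}. S i = sqrt (\<sigma> i - rho) *\<^sub>R u i))"

definition fd_sketch :: "nat \<Rightarrow> (nat \<Rightarrow> real^'d) \<Rightarrow> nat \<Rightarrow> (nat \<Rightarrow> nat \<Rightarrow> real^'d) \<Rightarrow> (nat \<Rightarrow> real) \<Rightarrow> bool" where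
  "fd_sketch m x t S rho \<longleftrightarrow>
     (\<forall>i. S 0 i = 0) \<and>
     (\<forall>s\<in>{1..t}. fd_step m (S (s - 1)) (x s) (S s) (rho s))"

end

theory Submission
  imports Defs
begin

text \<open>Each Frequent Directions step satisfies
  \<open>S\<^sub>s\<^sub>-\<^sub>1\<^sup>T S\<^sub>s\<^sub>-\<^sub>1 + x\<^sub>s x\<^sub>s\<^sup>T + E\<^sub>s = S\<^sub>s\<^sup>T S\<^sub>s + \<rho>\<^sub>s I\<close>,
  where \<open>E\<^sub>s\<close> collects the discarded eigendirections beyond the \<open>m\<close>-th and is positive
  semidefinite. Summing over the steps, \<open>V\<^sub>t\<close> plus a positive semidefinite matrix equals
  \<open>W = S\<^sub>t\<^sup>T S\<^sub>t + (\<lambda> + \<rho>\<^sub>1 + \<dots> + \<rho>\<^sub>t) I\<close>, so \<open>det V\<^sub>t \<le> det W\<close>: along a ray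
  \<open>M + s a a\<^sup>T\<close> the determinant is affine in \<open>s\<close> and stays nonzero while \<open>M\<close> is positive
  definite. In the eigenbasis of \<open>S\<^sub>t\<^sup>T S\<^sub>t\<close>, the matrix \<open>W\<close> has the eigenvalue
  \<open>\<lambda> + \<rho>\<^sub>1 + \<dots> + \<rho>\<^sub>t\<close> with multiplicity at least \<open>d - m\<close>, and its other \<open>m\<close>
  eigenvalues exceed it by amounts summing to
  \<open>tr (S\<^sub>t\<^sup>T S\<^sub>t) \<le> \<parallel>x\<^sub>1\<parallel>\<^sup>2 + \<dots> + \<parallel>x\<^sub>t\<parallel>\<^sup>2 \<le> t L\<^sup>2\<close>; AM-GM over these \<open>m\<close> eigenvalues
  gives the bound.\<close>

lemma outer_mulv: "outer a b *v z = (b \<bullet> z) *\<^sub>R a"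
  by (simp add: outer_def matrix_vector_mult_def vec_eq_iff inner_vec_def sum_distrib_left mult_ac)

lemma inner_outer_mulv_self: "z \<bullet> (outer a a *v z) = (a \<bullet> z)\<^sup>2"
  by (simp add: outer_mulv power2_eq_square inner_commute)

lemma matrix_mul_outer: "P ** outer a b = outer (P *v a) b"
  by (simp add: outer_def matrix_matrix_mult_def matrix_vector_mult_def vec_eq_iff sum_distrib_left mult_ac)

lemma outer_scaleR_left: "outer (c *\<^sub>R a) b = c *\<^sub>R outer a b"
  by (simp add: outer_def vec_eq_iff)

lemma outer_scaleR_self: "outer (c *\<^sub>R a) (c *\<^sub>R a) = c\<^sup>2 *\<^sub>R outer a a"
  by (simp add: outer_def vec_eq_iff power2_eq_square mult_ac)

lemma matrix_mul_scaleR_right: "P ** (c *\<^sub>R X) = c *\<^sub>R (P ** (X::real^'n^'m))"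
  by (simp add: matrix_matrix_mult_def vec_eq_iff sum_distrib_left mult_ac)

lemma scaleR_matrix_vector_mult: "(c *\<^sub>R A) *v z = c *\<^sub>R (A *v (z::real^'n))"
  by (simp add: matrix_vector_mult_def vec_eq_iff sum_distrib_left mult_ac)

lemma sum_matrix_vector_mult: "(\<Sum>i\<in>I. A i) *v (z::real^'n) = (\<Sum>i\<in>I. A i *v z)"
  by (induction I rule: infinite_finite_induct) (simp_all add: matrix_vector_mult_add_rdistrib)

lemma trace_outer: "trace (outer a b) = a \<bullet> b"
  by (simp add: trace_def outer_def inner_vec_def)

lemma trace_sum: "trace (\<Sum>i\<in>I. A i) = (\<Sum>i\<in>I. trace (A i :: real^'n^'n))"
  by (induction I rule: infinite_finite_induct) (simp_all add: trace_add trace_0[unfolded mat_0])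

lemma trace_scaleR: "trace (c *\<^sub>R (A::real^'n^'n)) = c * trace A"
  by (simp add: trace_def sum_distrib_left)

lemma det_scaleR_mat1: "det (c *\<^sub>R (mat 1 :: real^'n^'n)) = c ^ CARD('n)"
  by (subst det_diagonal) (auto simp: mat_def)

lemma sum_split_at:
  fixes f :: "nat \<Rightarrow> 'a::comm_monoid_add"
  assumes "1 \<le> m" "m \<le> n"
  shows "(\<Sum>i\<in>{1..n}. f i) = (\<Sum>i\<in>{1..m}. f i) + (\<Sum>i\<in>{m<..n}. f i)"
  unfolding ivl_disj_un_two(8)[OF assms, symmetric] by (rule sum.union_disjoint) auto

lemma prod_split_at:
  fixes f :: "nat \<Rightarrow> 'a::comm_monoid_mult"
  assumes "1 \<le> m" "m \<le> n"
  shows "(\<Prod>i\<in>{1..n}. f i) = (\<Prod>i\<in>{1..m}. f i) * (\<Prod>i\<in>{m<..n}. f i)"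
  unfolding ivl_disj_un_two(8)[OF assms, symmetric] by (rule prod.union_disjoint) auto

section \<open>Determinants under positive semidefinite updates\<close>

lemma det_add_outer_axis:
  fixes N :: "real^'n^'n"
  shows "det (N + r *\<^sub>R outer (axis k 1) b) = det N + r * det (\<chi> i. if i = k then b else row i N)"
proof -
  have "N + r *\<^sub>R outer (axis k 1) b = (\<chi> i. if i = k then row i N + r *s b else row i N)"
    by (simp add: outer_def vec_eq_iff axis_def row_def)
  moreover have "(\<chi> i. if i = k then row i N else row i N) = N"
    by (simp add: vec_eq_iff row_def)
  ultimately show ?thesis
    using det_row_add[of k "\<lambda>i. row i N" "\<lambda>i. r *s b" "\<lambda>i. row i N"]
      det_row_mul[of k r "\<lambda>i. b" "\<lambda>i. row i N"] by simp
qed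

text \<open>Rotating \<open>a\<close> onto a coordinate axis turns the rank-one update into an update of a
  single row, on which the determinant is linear.\<close>
lemma det_add_outer_affine:
  fixes M :: "real^'n^'n"
  obtains D where "\<And>s. det (M + s *\<^sub>R outer a b) = det M + s * D"
proof (cases "a = 0")
  case True
  then have "outer a b = 0" by (simp add: outer_def vec_eq_iff)
  then show ?thesis by (intro that[of 0]) simp
next
  case False
  then obtain Q where Q: "orthogonal_matrix Q" "Q *v axis k 1 = a /\<^sub>R norm a"
    using orthogonal_matrix_exists_basis[of "a /\<^sub>R norm a"] by auto
  define P where "P = transpose Q"
  have "P *v a = norm a *\<^sub>R (P *v (a /\<^sub>R norm a))"
    using False by (simp flip: matrix_vector_mult_scaleR)
  also have "P *v (a /\<^sub>R norm a) = axis k 1"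
    using Q by (metis P_def matrix_vector_mul_assoc matrix_vector_mul_lid orthogonal_matrix)
  finally have Pa: "P *v a = norm a *\<^sub>R axis k 1" .
  have dP: "det P \<noteq> 0"
    using det_orthogonal_matrix[of P] Q(1) by (auto simp: P_def)
  define r where "r = det (\<chi> i. if i = k then b else row i (P ** M))"
  have "det P * det (M + s *\<^sub>R outer a b) = det P * det M + s * (norm a * r)" for s
  proof -
    have "det P * det (M + s *\<^sub>R outer a b) = det (P ** (M + s *\<^sub>R outer a b))"
      by (simp add: det_mul)
    also have "P ** (M + s *\<^sub>R outer a b) = P ** M + (s * norm a) *\<^sub>R outer (axis k 1) b"
      by (simp add: matrix_add_ldistrib matrix_mul_scaleR_right matrix_mul_outer Pa outer_scaleR_left)
    finally show ?thesis
      by (simp add: det_add_outer_axis det_mul r_def)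
  qed
  then show ?thesis
    using dP by (intro that[of "norm a * r / det P"]) (simp add: field_simps)
qed

definition pos_def :: "real^'n^'n \<Rightarrow> bool" where
  "pos_def M \<longleftrightarrow> (\<forall>z. z \<noteq> 0 \<longrightarrow> 0 < z \<bullet> (M *v z))"

lemma pos_def_scaleR_mat1: "0 < c \<Longrightarrow> pos_def (c *\<^sub>R mat 1)"
  by (simp add: pos_def_def scaleR_matrix_vector_mult)

lemma pos_def_add_outer: "pos_def M \<Longrightarrow> 0 \<le> c \<Longrightarrow> pos_def (M + c *\<^sub>R outer a a)"
  unfolding pos_def_def
  by (simp add: matrix_vector_mult_add_rdistrib scaleR_matrix_vector_mult inner_add_right
      inner_outer_mulv_self add_pos_nonneg)

lemma pos_def_det_nonzero: "pos_def M \<Longrightarrow> det M \<noteq> 0"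
  unfolding pos_def_def
  by (metis det_eq_0_rank inner_zero_right less_irrefl less_rank_noninjective vec.inj_iff_eq_0)

text \<open>The determinant is affine along the ray, and it cannot cross zero because
  positive definiteness is preserved.\<close>
lemma det_le_det_add_outer:
  assumes "pos_def M" "0 < det M" "0 \<le> c"
  shows "det M \<le> det (M + c *\<^sub>R outer a a)"
proof -
  obtain D where D: "\<And>s. det (M + s *\<^sub>R outer a a) = det M + s * D"
    using det_add_outer_affine by blast
  have "0 \<le> D"
  proof (rule ccontr)
    assume "\<not> 0 \<le> D"
    define s where "s = - det M / D"
    have "det (M + s *\<^sub>R outer a a) = 0" and "0 \<le> s"
      using D[of s] \<open>\<not> 0 \<le> D\<close> assms(2) by (auto simp: s_def divide_nonneg_neg)
    then show False using pos_def_add_outer[OF assms(1)] pos_def_det_nonzero by blast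
  qed
  then show ?thesis using D[of c] assms(3) by simp
qed

text \<open>The cone generated by the matrices \<open>a a\<^sup>T\<close>. It is the cone of positive semidefinite
  matrices, but only this generated form is needed, which avoids the spectral theorem.\<close>
inductive_set outer_cone :: "(real^'n^'n) set" where
  zero: "0 \<in> outer_cone"
| add_outer: "P \<in> outer_cone \<Longrightarrow> 0 \<le> c \<Longrightarrow> P + c *\<^sub>R outer a a \<in> outer_cone"

lemma outer_cone_add:
  assumes "P \<in> outer_cone" "Q \<in> outer_cone"
  shows "P + Q \<in> outer_cone"
  using assms(2) by induction (auto simp flip: add.assoc intro: assms(1) outer_cone.add_outer)

lemma outer_cone_sum:
  "(\<And>i. i \<in> I \<Longrightarrow> 0 \<le> c i) \<Longrightarrow> (\<Sum>i\<in>I. c i *\<^sub>R outer (a i) (a i)) \<in> outer_cone"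
  by (induction I rule: infinite_finite_induct)
    (auto intro!: outer_cone_add outer_cone.add_outer[of 0, simplified] outer_cone.zero)

lemma det_le_det_add_outer_cone:
  assumes "P \<in> outer_cone" "pos_def M" "0 < det M"
  shows "pos_def (M + P) \<and> det M \<le> det (M + P)"
  using assms(1)
proof (induction P rule: outer_cone.induct)
  case (add_outer P c a)
  then have "det (M + P) \<le> det (M + P + c *\<^sub>R outer a a)"
    using assms(3) by (intro det_le_det_add_outer) auto
  with add_outer show ?case by (simp add: pos_def_add_outer flip: add.assoc)
qed (simp add: assms)

lemma regularized_covariance_pos_def:
  fixes x :: "'i \<Rightarrow> real^'d"
  assumes "0 < lam"
  shows "pos_def ((\<Sum>s\<in>A. outer (x s) (x s)) + lam *\<^sub>R mat 1)"
    and "0 < det ((\<Sum>s\<in>A. outer (x s) (x s)) + lam *\<^sub>R mat 1)"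
proof -
  have "(\<Sum>s\<in>A. outer (x s) (x s)) \<in> outer_cone"
    using outer_cone_sum[of A "\<lambda>_. 1" x] by simp
  from det_le_det_add_outer_cone[OF this pos_def_scaleR_mat1[OF assms]]
  have "pos_def ((\<Sum>s\<in>A. outer (x s) (x s)) + lam *\<^sub>R mat 1)"
    and "lam ^ CARD('d) \<le> det ((\<Sum>s\<in>A. outer (x s) (x s)) + lam *\<^sub>R mat 1)"
    using assms by (simp_all add: det_scaleR_mat1 add.commute)
  with assms show "pos_def ((\<Sum>s\<in>A. outer (x s) (x s)) + lam *\<^sub>R mat 1)"
    and "0 < det ((\<Sum>s\<in>A. outer (x s) (x s)) + lam *\<^sub>R mat 1)"
    by (auto intro: less_le_trans[OF zero_less_power])
qed

section \<open>Orthonormal eigenbases\<close>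

definition orthonormal_on :: "'i set \<Rightarrow> ('i \<Rightarrow> 'a::real_inner) \<Rightarrow> bool" where
  "orthonormal_on I u \<longleftrightarrow> (\<forall>i\<in>I. \<forall>j\<in>I. u i \<bullet> u j = (if i = j then 1 else 0))"

lemma orthonormal_on_inj_on: "orthonormal_on I u \<Longrightarrow> inj_on u I"
  unfolding orthonormal_on_def inj_on_def by (metis zero_neq_one)

lemma orthonormal_on_expansion:
  fixes u :: "'i \<Rightarrow> real^'d"
  assumes u: "orthonormal_on I u" and I: "finite I" "card I = CARD('d)"
  shows "(\<Sum>i\<in>I. (z \<bullet> u i) *\<^sub>R u i) = z"
proof -
  have inj: "inj_on u I" using u by (rule orthonormal_on_inj_on)
  have orth: "pairwise orthogonal (u ` I)" and norm1: "\<And>b. b \<in> u ` I \<Longrightarrow> norm b = 1"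
    using u by (auto simp: orthonormal_on_def pairwise_def orthogonal_def norm_eq_1)
  then have "independent (u ` I)"
    using norm1[of 0] by (intro pairwise_orthogonal_independent) auto
  moreover have "card (u ` I) = dim (UNIV :: (real^'d) set)"
    using inj I by (simp add: card_image)
  ultimately have "z \<in> span (u ` I)"
    using card_eq_dim[of "u ` I" UNIV] I by auto
  then have "(\<Sum>b\<in>u ` I. (z \<bullet> b) *\<^sub>R b) = z"
    using orth norm1 I by (intro orthonormal_basis_expand) auto
  then show ?thesis by (simp add: sum.reindex[OF inj])
qed

lemma orthonormal_on_eigen_expansion:
  fixes u :: "'i \<Rightarrow> real^'d"
  assumes u: "orthonormal_on I u" and I: "finite I" "card I = CARD('d)"
    and eigen: "\<And>i. i \<in> I \<Longrightarrow> A *v u i = \<sigma> i *\<^sub>R u i"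
  shows "A = (\<Sum>i\<in>I. \<sigma> i *\<^sub>R outer (u i) (u i))"
  unfolding matrix_eq
proof
  fix z
  have "A *v z = A *v (\<Sum>i\<in>I. (z \<bullet> u i) *\<^sub>R u i)"
    using orthonormal_on_expansion[OF u I] by simp
  also have "\<dots> = (\<Sum>i\<in>I. (z \<bullet> u i) *\<^sub>R (\<sigma> i *\<^sub>R u i))"
    using eigen by (simp add: linear_sum[OF matrix_vector_mul_linear] matrix_vector_mult_scaleR)
  also have "\<dots> = (\<Sum>i\<in>I. \<sigma> i *\<^sub>R outer (u i) (u i)) *v z"
    by (simp add: sum_matrix_vector_mult scaleR_matrix_vector_mult outer_mulv inner_commute mult.commute)
  finally show "A *v z = (\<Sum>i\<in>I. \<sigma> i *\<^sub>R outer (u i) (u i)) *v z" .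
qed

lemma orthonormal_on_sum_outer:
  fixes u :: "'i \<Rightarrow> real^'d"
  assumes "orthonormal_on I u" "finite I" "card I = CARD('d)"
  shows "(\<Sum>i\<in>I. outer (u i) (u i)) = mat 1"
  using orthonormal_on_eigen_expansion[OF assms, of "mat 1" "\<lambda>_. 1"] by simp

text \<open>Writing the matrix as \<open>Q D Q\<^sup>T\<close> with \<open>Q\<close> orthogonal and \<open>D\<close> diagonal.\<close>
lemma det_sum_scaleR_outer_orthonormal:
  fixes u :: "'i \<Rightarrow> real^'d"
  assumes u: "orthonormal_on I u" and I: "finite I" "card I = CARD('d)"
  shows "det (\<Sum>i\<in>I. w i *\<^sub>R outer (u i) (u i)) = (\<Prod>i\<in>I. w i)"
proof -
  obtain g where g: "bij_betw g (UNIV :: 'd set) I"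
    using finite_same_card_bij[of "UNIV :: 'd set" I] I by auto
  define Q :: "real^'d^'d" where "Q = (\<chi> a j. u (g j) $ a)"
  define D :: "real^'d^'d" where "D = (\<chi> a b. if a = b then w (g a) else 0)"
  have gI: "g j \<in> I" for j using g by (auto simp: bij_betw_def)
  have "(\<Sum>i\<in>I. w i *\<^sub>R outer (u i) (u i)) = (\<Sum>j\<in>UNIV. w (g j) *\<^sub>R outer (u (g j)) (u (g j)))"
    using sum.reindex_bij_betw[OF g, of "\<lambda>i. w i *\<^sub>R outer (u i) (u i)"] by simp
  also have "\<dots> = Q ** D ** transpose Q"
    by (simp add: vec_eq_iff sum_component outer_def Q_def D_def matrix_matrix_mult_def transpose_def
        if_distrib sum.delta cong: if_cong) (simp add: mult_ac)
  finally have QDQ: "(\<Sum>i\<in>I. w i *\<^sub>R outer (u i) (u i)) = Q ** D ** transpose Q" .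
  have "u (g j) \<bullet> u (g k) = (if j = k then 1 else 0)" for j k
    using u gI g by (auto simp: orthonormal_on_def bij_betw_def inj_on_def)
  then have "transpose Q ** Q = mat 1"
    by (simp add: vec_eq_iff Q_def matrix_matrix_mult_def transpose_def mat_def inner_vec_def)
  then have "det Q * det Q = 1"
    using det_mul[of "transpose Q" Q] by simp
  moreover have "det D = (\<Prod>j\<in>UNIV. w (g j))"
    by (subst det_diagonal) (auto simp: D_def)
  moreover have "(\<Prod>j\<in>UNIV. w (g j)) = (\<Prod>i\<in>I. w i)"
    using prod.reindex_bij_betw[OF g, of w] by simp
  ultimately show ?thesis
    unfolding QDQ det_mul det_transpose by (simp add: mult_ac)
qed

text \<open>AM-GM, via \<open>ln y \<le> y - 1\<close> at \<open>y = a i / mean\<close>.\<close>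
lemma sum_ln_le_card_ln_mean:
  fixes a :: "'i \<Rightarrow> real"
  assumes "finite K" "K \<noteq> {}" "\<And>i. i \<in> K \<Longrightarrow> 0 < a i"
  shows "(\<Sum>i\<in>K. ln (a i)) \<le> card K * ln ((\<Sum>i\<in>K. a i) / card K)"
proof -
  define n where "n = real (card K)"
  define \<mu> where "\<mu> = (\<Sum>i\<in>K. a i) / n"
  have n: "0 < n" using assms by (simp add: n_def card_gt_0_iff)
  have "0 < (\<Sum>i\<in>K. a i)" using assms by (intro sum_pos) auto
  then have \<mu>: "0 < \<mu>" and sum_a: "(\<Sum>i\<in>K. a i) / \<mu> = n" using n by (simp_all add: \<mu>_def)
  have "ln (a i) \<le> ln \<mu> + (a i / \<mu> - 1)" if "i \<in> K" for i
    using ln_le_minus_one[of "a i / \<mu>"] assms(3)[OF that] \<mu> by (simp add: ln_div)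
  then have "(\<Sum>i\<in>K. ln (a i)) \<le> (\<Sum>i\<in>K. ln \<mu> + (a i / \<mu> - 1))"
    by (intro sum_mono) auto
  also have "\<dots> = n * ln \<mu> + ((\<Sum>i\<in>K. a i) / \<mu> - n)"
    by (simp add: sum.distrib sum_subtractf sum_divide_distrib[symmetric] n_def)
  also have "\<dots> = n * ln \<mu>"
    by (simp only: sum_a diff_self add_0_right)
  finally show ?thesis by (simp add: n_def \<mu>_def)
qed

lemma sum_ln_add_le:
  fixes g :: "nat \<Rightarrow> real"
  assumes "0 < c" "1 \<le> m" "\<And>i. i \<in> {1..m} \<Longrightarrow> 0 \<le> g i"
  shows "(\<Sum>i\<in>{1..m}. ln (c + g i)) \<le> m * ln c + m * ln (1 + (\<Sum>i\<in>{1..m}. g i) / (m * c))"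
proof -
  define X where "X = (\<Sum>i\<in>{1..m}. g i) / (m * c)"
  have X: "0 \<le> X"
    using assms by (auto simp: X_def intro!: divide_nonneg_pos sum_nonneg)
  have "(\<Sum>i\<in>{1..m}. ln (c + g i)) \<le> m * ln ((\<Sum>i\<in>{1..m}. c + g i) / m)"
    using sum_ln_le_card_ln_mean[of "{1..m}" "\<lambda>i. c + g i"] assms by (simp add: add_pos_nonneg)
  also have "(\<Sum>i\<in>{1..m}. c + g i) / m = c * (1 + X)"
    using assms by (simp add: X_def sum.distrib field_simps)
  also have "ln (c * (1 + X)) = ln c + ln (1 + X)"
    using X assms(1) by (intro ln_mult_pos) auto
  finally show ?thesis by (simp add: X_def distrib_left)
qed

lemma sum_inner_self_le:
  fixes x :: "'i \<Rightarrow> 'a::real_inner" and L :: real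
  assumes "\<And>s. s \<in> A \<Longrightarrow> norm (x s) \<le> L"
  shows "(\<Sum>s\<in>A. x s \<bullet> x s) \<le> card A * L\<^sup>2"
proof -
  have "(\<Sum>s\<in>A. x s \<bullet> x s) \<le> (\<Sum>s\<in>A. L\<^sup>2)"
    using assms by (intro sum_mono) (simp add: power2_norm_eq_inner[symmetric] power_mono)
  then show ?thesis by simp
qed

section \<open>A single Frequent Directions step\<close>

lemma inner_gram_mulv_nonneg: "0 \<le> z \<bullet> (gram m S *v z)"
  by (simp add: gram_def sum_matrix_vector_mult inner_sum_right inner_outer_mulv_self sum_nonneg)

lemma trace_gram_nonneg: "0 \<le> trace (gram m S)"
  by (simp add: gram_def trace_sum trace_outer sum_nonneg)

lemma fd_step_spectral:
  fixes Sp S :: "nat \<Rightarrow> real^'d"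
  assumes step: "fd_step m Sp x S rho" and m: "1 \<le> m" "m \<le> CARD('d)"
  obtains \<sigma> u where "orthonormal_on {1..CARD('d)} u"
    and "gram m Sp + outer x x = (\<Sum>i\<in>{1..CARD('d)}. \<sigma> i *\<^sub>R outer (u i) (u i))"
    and "gram m S = (\<Sum>i\<in>{1..m}. (\<sigma> i - rho) *\<^sub>R outer (u i) (u i))"
    and "\<And>i. i \<in> {1..CARD('d)} \<Longrightarrow> 0 \<le> \<sigma> i"
    and "\<And>i. i \<in> {1..m} \<Longrightarrow> rho \<le> \<sigma> i"
    and "\<And>i. i \<in> {m<..CARD('d)} \<Longrightarrow> \<sigma> i \<le> rho"
    and "rho = \<sigma> m"
proof -
  let ?I = "{1..CARD('d)}" and ?A = "gram m Sp + outer x x"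
  obtain \<sigma> u where u: "orthonormal_on ?I u"
    and eigen: "\<And>i. i \<in> ?I \<Longrightarrow> ?A *v u i = \<sigma> i *\<^sub>R u i"
    and sorted: "\<And>i j. i \<in> ?I \<Longrightarrow> j \<in> ?I \<Longrightarrow> i \<le> j \<Longrightarrow> \<sigma> j \<le> \<sigma> i"
    and rho: "rho = \<sigma> m"
    and rows: "\<And>i. i \<in> {1..m} \<Longrightarrow> S i = sqrt (\<sigma> i - rho) *\<^sub>R u i"
    using step unfolding fd_step_def orthonormal_on_def by blast
  have top: "rho \<le> \<sigma> i" if "i \<in> {1..m}" for i
    using sorted[of i m] that m rho by auto
  have "0 \<le> \<sigma> i" if "i \<in> ?I" for i
  proof -
    have "\<sigma> i = u i \<bullet> (?A *v u i)"
      using eigen[OF that] u that by (simp add: orthonormal_on_def)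
    also have "\<dots> = u i \<bullet> (gram m Sp *v u i) + (x \<bullet> u i)\<^sup>2"
      by (simp add: matrix_vector_mult_add_rdistrib inner_add_right inner_outer_mulv_self)
    finally show ?thesis
      using inner_gram_mulv_nonneg[of "u i" m Sp] by simp
  qed
  moreover have "gram m S = (\<Sum>i\<in>{1..m}. (\<sigma> i - rho) *\<^sub>R outer (u i) (u i))"
    unfolding gram_def using top by (intro sum.cong) (simp_all add: rows outer_scaleR_self)
  moreover have "\<sigma> i \<le> rho" if "i \<in> {m<..CARD('d)}" for i
    using sorted[of m i] that m rho by auto
  ultimately show thesis
    using that[OF u orthonormal_on_eigen_expansion[OF u _ _ eigen] _ _ top _ rho] by auto
qed

lemma fd_step_rho_nonneg:
  assumes "fd_step m Sp x (S :: nat \<Rightarrow> real^'d) rho" "1 \<le> m" "m \<le> CARD('d)"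
  shows "0 \<le> rho"
proof (rule fd_step_spectral[OF assms])
  fix \<sigma> :: "nat \<Rightarrow> real"
  assume "\<And>i. i \<in> {1..CARD('d)} \<Longrightarrow> 0 \<le> \<sigma> i" "rho = \<sigma> m"
  then show ?thesis using assms(2,3) by simp
qed

text \<open>The sketch loses exactly \<open>\<rho>\<close> in every direction, up to the discarded correction
  \<open>E = \<Sum>\<^sub>i\<^sub>>\<^sub>m (\<rho> - \<sigma>\<^sub>i) u\<^sub>i u\<^sub>i\<^sup>T\<close>, which is positive semidefinite.\<close>
lemma fd_step_gram_update:
  assumes "fd_step m Sp x (S :: nat \<Rightarrow> real^'d) rho" "1 \<le> m" "m \<le> CARD('d)"
  obtains E where "E \<in> outer_cone" "gram m Sp + outer x x + E = gram m S + rho *\<^sub>R mat 1"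
proof (rule fd_step_spectral[OF assms])
  fix \<sigma> :: "nat \<Rightarrow> real" and u :: "nat \<Rightarrow> real^'d"
  let ?I = "{1..CARD('d)}" and ?P = "\<lambda>i. outer (u i) (u i)"
  assume u: "orthonormal_on ?I u"
    and A: "gram m Sp + outer x x = (\<Sum>i\<in>?I. \<sigma> i *\<^sub>R ?P i)"
    and G: "gram m S = (\<Sum>i\<in>{1..m}. (\<sigma> i - rho) *\<^sub>R ?P i)"
    and low: "\<And>i. i \<in> {m<..CARD('d)} \<Longrightarrow> \<sigma> i \<le> rho"
  have one: "mat 1 = (\<Sum>i\<in>?I. ?P i)"
    using orthonormal_on_sum_outer[OF u] by simp
  define E where "E = (\<Sum>i\<in>{m<..CARD('d)}. (rho - \<sigma> i) *\<^sub>R ?P i)"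
  have "E \<in> outer_cone"
    unfolding E_def using low by (intro outer_cone_sum) simp
  moreover have "gram m Sp + outer x x + E = gram m S + rho *\<^sub>R mat 1"
    unfolding A G E_def one sum_split_at[OF assms(2,3)]
    by (simp add: algebra_simps sum.distrib sum_subtractf scaleR_sum_right)
  ultimately show thesis by (rule that)
qed

lemma fd_step_trace_gram_le:
  assumes "fd_step m Sp x (S :: nat \<Rightarrow> real^'d) rho" "1 \<le> m" "m \<le> CARD('d)"
  shows "trace (gram m S) \<le> trace (gram m Sp) + x \<bullet> x"
proof (rule fd_step_spectral[OF assms])
  fix \<sigma> :: "nat \<Rightarrow> real" and u :: "nat \<Rightarrow> real^'d"
  let ?I = "{1..CARD('d)}"
  assume u: "orthonormal_on ?I u"
    and A: "gram m Sp + outer x x = (\<Sum>i\<in>?I. \<sigma> i *\<^sub>R outer (u i) (u i))"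
    and G: "gram m S = (\<Sum>i\<in>{1..m}. (\<sigma> i - rho) *\<^sub>R outer (u i) (u i))"
    and nonneg: "\<And>i. i \<in> ?I \<Longrightarrow> 0 \<le> \<sigma> i" and "rho = \<sigma> m"
  have tr1: "trace (outer (u i) (u i)) = 1" if "i \<in> ?I" for i
    using u that by (simp add: trace_outer orthonormal_on_def)
  have "0 \<le> rho" using nonneg \<open>rho = \<sigma> m\<close> assms(2,3) by simp
  then have "trace (gram m S) \<le> (\<Sum>i\<in>{1..m}. \<sigma> i)"
    unfolding G trace_sum trace_scaleR using tr1 assms(3) by (simp add: sum_subtractf)
  also have "\<dots> \<le> (\<Sum>i\<in>?I. \<sigma> i)"
    using nonneg assms(3) by (intro sum_mono2) auto
  also have "\<dots> = trace (gram m Sp) + x \<bullet> x"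
    using arg_cong[OF A, of trace] tr1 by (simp add: trace_sum trace_scaleR trace_add trace_outer)
  finally show ?thesis .
qed

text \<open>In the eigenbasis of the new sketch, \<open>S\<^sup>TS + cI\<close> has eigenvalue \<open>c\<close> with multiplicity
  \<open>d - m\<close>, so AM-GM is only needed over \<open>m\<close> eigenvalues.\<close>
lemma fd_step_ln_det_gram_le:
  assumes "fd_step m Sp x (S :: nat \<Rightarrow> real^'d) rho" "1 \<le> m" "m \<le> CARD('d)" "0 < c"
  shows "ln (det (gram m S + c *\<^sub>R mat 1))
    \<le> CARD('d) * ln c + m * ln (1 + trace (gram m S) / (m * c))"
proof (rule fd_step_spectral[OF assms(1-3)])
  fix \<sigma> :: "nat \<Rightarrow> real" and u :: "nat \<Rightarrow> real^'d"
  let ?I = "{1..CARD('d)}" and ?P = "\<lambda>i. outer (u i) (u i)"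
  assume u: "orthonormal_on ?I u"
    and G: "gram m S = (\<Sum>i\<in>{1..m}. (\<sigma> i - rho) *\<^sub>R ?P i)"
    and top: "\<And>i. i \<in> {1..m} \<Longrightarrow> rho \<le> \<sigma> i"
  have one: "mat 1 = (\<Sum>i\<in>?I. ?P i)"
    using orthonormal_on_sum_outer[OF u] by simp
  define w where "w i = c + (if i \<le> m then \<sigma> i - rho else 0)" for i
  have "gram m S + c *\<^sub>R mat 1 = (\<Sum>i\<in>?I. w i *\<^sub>R ?P i)"
    unfolding G w_def one sum_split_at[OF assms(2,3)]
    by (simp add: sum.distrib sum_subtractf algebra_simps scaleR_sum_right)
  then have "det (gram m S + c *\<^sub>R mat 1) = (\<Prod>i\<in>{1..m}. c + (\<sigma> i - rho)) * c ^ (CARD('d) - m)"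
    using det_sum_scaleR_outer_orthonormal[OF u] prod_split_at[OF assms(2,3), of w]
    by (simp add: w_def)
  moreover have tr: "trace (gram m S) = (\<Sum>i\<in>{1..m}. \<sigma> i - rho)"
    using u assms(3) unfolding G trace_sum trace_scaleR
    by (intro sum.cong) (auto simp: trace_outer orthonormal_on_def)
  moreover have "0 < (\<Prod>i\<in>{1..m}. c + (\<sigma> i - rho))"
    using top assms(4) by (intro prod_pos) (simp add: add_pos_nonneg)
  moreover have "ln (\<Prod>i\<in>{1..m}. c + (\<sigma> i - rho)) = (\<Sum>i\<in>{1..m}. ln (c + (\<sigma> i - rho)))"
    using top assms(4) by (intro ln_prod) (simp_all add: add_pos_nonneg less_imp_neq[symmetric])
  ultimately have "ln (det (gram m S + c *\<^sub>R mat 1))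
      = (\<Sum>i\<in>{1..m}. ln (c + (\<sigma> i - rho))) + (CARD('d) - m) * ln c"
    using assms(4) by (simp add: ln_mult_pos ln_realpow)
  also have "\<dots> \<le> CARD('d) * ln c + m * ln (1 + trace (gram m S) / (m * c))"
    using sum_ln_add_le[of c m "\<lambda>i. \<sigma> i - rho"] top assms(2-4)
    by (simp add: tr of_nat_diff algebra_simps)
  finally show ?thesis .
qed

section \<open>The Frequent Directions sketch\<close>

lemma fd_sketch_Suc:
  "fd_sketch m x (Suc t) S \<rho> \<longleftrightarrow>
     fd_sketch m x t S \<rho> \<and> fd_step m (S t) (x (Suc t)) (S (Suc t)) (\<rho> (Suc t))"
  unfolding fd_sketch_def by (auto simp: atLeastAtMostSuc_conv)

lemma fd_sketch_gram_0: "fd_sketch m x t S \<rho> \<Longrightarrow> gram m (S 0) = 0"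
  by (simp add: fd_sketch_def gram_def outer_def vec_eq_iff)

lemma fd_sketch_rho_nonneg:
  assumes "fd_sketch m x t (S :: nat \<Rightarrow> nat \<Rightarrow> real^'d) \<rho>" "1 \<le> m" "m \<le> CARD('d)" "s \<in> {1..t}"
  shows "0 \<le> \<rho> s"
  using assms fd_step_rho_nonneg unfolding fd_sketch_def by blast

lemma fd_sketch_gram_decomposition:
  assumes "fd_sketch m x t (S :: nat \<Rightarrow> nat \<Rightarrow> real^'d) \<rho>" "1 \<le> m" "m \<le> CARD('d)"
  shows "\<exists>E\<in>outer_cone.
    (\<Sum>s\<in>{1..t}. outer (x s) (x s)) + E = gram m (S t) + (\<Sum>s\<in>{1..t}. \<rho> s) *\<^sub>R mat 1"
  using assms(1)
proof (induction t)
  case 0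
  then show ?case using fd_sketch_gram_0 outer_cone.zero by fastforce
next
  case (Suc t)
  have step: "fd_step m (S t) (x (Suc t)) (S (Suc t)) (\<rho> (Suc t))"
    using Suc.prems by (simp add: fd_sketch_Suc)
  obtain E where E: "E \<in> outer_cone"
    "(\<Sum>s\<in>{1..t}. outer (x s) (x s)) + E = gram m (S t) + (\<Sum>s\<in>{1..t}. \<rho> s) *\<^sub>R mat 1"
    using Suc by (auto simp: fd_sketch_Suc)
  obtain E' where E': "E' \<in> outer_cone" "gram m (S t) + outer (x (Suc t)) (x (Suc t)) + E'
      = gram m (S (Suc t)) + \<rho> (Suc t) *\<^sub>R mat 1"
    using fd_step_gram_update[OF step assms(2,3)] by blast
  have "(\<Sum>s\<in>{1..Suc t}. outer (x s) (x s)) + (E + E')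
      = ((\<Sum>s\<in>{1..t}. outer (x s) (x s)) + E) + (outer (x (Suc t)) (x (Suc t)) + E')"
    by (simp add: ac_simps)
  also have "\<dots> = (gram m (S t) + outer (x (Suc t)) (x (Suc t)) + E') + (\<Sum>s\<in>{1..t}. \<rho> s) *\<^sub>R mat 1"
    unfolding E(2) by (simp add: ac_simps)
  also have "\<dots> = gram m (S (Suc t)) + (\<Sum>s\<in>{1..Suc t}. \<rho> s) *\<^sub>R mat 1"
    unfolding E'(2) by (simp add: scaleR_add_left ac_simps)
  finally show ?case using outer_cone_add[OF E(1) E'(1)] by blast
qed

lemma fd_sketch_trace_gram_le:
  assumes "fd_sketch m x t (S :: nat \<Rightarrow> nat \<Rightarrow> real^'d) \<rho>" "1 \<le> m" "m \<le> CARD('d)"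
  shows "trace (gram m (S t)) \<le> (\<Sum>s\<in>{1..t}. x s \<bullet> x s)"
  using assms(1)
proof (induction t)
  case 0
  then show ?case by (simp add: fd_sketch_gram_0 trace_0[unfolded mat_0])
next
  case (Suc t)
  then show ?case
    using fd_step_trace_gram_le[OF _ assms(2,3)] by (fastforce simp: fd_sketch_Suc)
qed

lemma fd_sketch_ln_det_le:
  assumes sketch: "fd_sketch m x t (S :: nat \<Rightarrow> nat \<Rightarrow> real^'d) \<rho>"
    and m: "1 \<le> m" "m \<le> CARD('d)" and "0 < t" "0 < lam"
  defines "c \<equiv> lam + (\<Sum>s\<in>{1..t}. \<rho> s)"
  shows "ln (det ((\<Sum>s\<in>{1..t}. outer (x s) (x s)) + lam *\<^sub>R mat 1))
    \<le> CARD('d) * ln c + m * ln (1 + trace (gram m (S t)) / (m * c))"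
proof -
  let ?V = "(\<Sum>s\<in>{1..t}. outer (x s) (x s)) + lam *\<^sub>R mat 1"
  have "0 \<le> (\<Sum>s\<in>{1..t}. \<rho> s)"
    by (rule sum_nonneg) (rule fd_sketch_rho_nonneg[OF sketch m])
  then have "0 < c" using \<open>0 < lam\<close> by (simp add: c_def)
  have "0 < det ?V"
    using regularized_covariance_pos_def(2)[OF \<open>0 < lam\<close>] .
  obtain E where "E \<in> outer_cone"
    and "(\<Sum>s\<in>{1..t}. outer (x s) (x s)) + E = gram m (S t) + (\<Sum>s\<in>{1..t}. \<rho> s) *\<^sub>R mat 1"
    using fd_sketch_gram_decomposition[OF sketch m] by blast
  moreover from this(2) have "?V + E = gram m (S t) + c *\<^sub>R mat 1"
    by (simp add: c_def scaleR_add_left algebra_simps)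
  ultimately have "det ?V \<le> det (gram m (S t) + c *\<^sub>R mat 1)"
    using det_le_det_add_outer_cone[of E ?V] regularized_covariance_pos_def(1)[OF \<open>0 < lam\<close>, of x "{1..t}"]
      \<open>0 < det ?V\<close> by simp
  then have "ln (det ?V) \<le> ln (det (gram m (S t) + c *\<^sub>R mat 1))"
    using \<open>0 < det ?V\<close> by simp
  also obtain t' where "t = Suc t'" using \<open>0 < t\<close> gr0_implies_Suc by blast
  then have "fd_step m (S t') (x t) (S t) (\<rho> t)"
    using sketch by (simp add: fd_sketch_Suc)
  from fd_step_ln_det_gram_le[OF this m \<open>0 < c\<close>]
  have "ln (det (gram m (S t) + c *\<^sub>R mat 1))
      \<le> CARD('d) * ln c + m * ln (1 + trace (gram m (S t)) / (m * c))" .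
  finally show ?thesis .
qed

lemma fd_sketch_ln_det_ratio_le:
  assumes sketch: "fd_sketch m x t (S :: nat \<Rightarrow> nat \<Rightarrow> real^'d) \<rho>"
    and m: "1 \<le> m" "m \<le> CARD('d)" and "0 < lam"
  shows "ln (det ((\<Sum>s\<in>{1..t}. outer (x s) (x s)) + lam *\<^sub>R mat 1) / det (lam *\<^sub>R (mat 1 :: real^'d^'d)))
    \<le> CARD('d) * ln (1 + (\<Sum>s\<in>{1..t}. \<rho> s) / lam)
       + m * ln (1 + (\<Sum>s\<in>{1..t}. x s \<bullet> x s) / (m * lam))"
proof (cases "t = 0")
  case False
  let ?V = "(\<Sum>s\<in>{1..t}. outer (x s) (x s)) + lam *\<^sub>R mat 1" and ?T = "trace (gram m (S t))"
  define c where "c = lam + (\<Sum>s\<in>{1..t}. \<rho> s)"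
  have "0 \<le> (\<Sum>s\<in>{1..t}. \<rho> s)"
    by (rule sum_nonneg) (rule fd_sketch_rho_nonneg[OF sketch m])
  then have "lam \<le> c" by (simp add: c_def)
  have "?T / (m * c) \<le> (\<Sum>s\<in>{1..t}. x s \<bullet> x s) / (m * lam)"
    using fd_sketch_trace_gram_le[OF sketch m] \<open>lam \<le> c\<close> \<open>0 < lam\<close> m
    by (intro frac_le) (auto simp: sum_nonneg)
  moreover have "0 \<le> ?T / (m * c)"
    using trace_gram_nonneg[of m "S t"] \<open>lam \<le> c\<close> \<open>0 < lam\<close> by simp
  ultimately have ln_trace: "ln (1 + ?T / (m * c)) \<le> ln (1 + (\<Sum>s\<in>{1..t}. x s \<bullet> x s) / (m * lam))"
    by simp
  have "ln (det ?V / det (lam *\<^sub>R (mat 1 :: real^'d^'d))) = ln (det ?V) - CARD('d) * ln lam"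
    using regularized_covariance_pos_def(2)[OF \<open>0 < lam\<close>, of x "{1..t}"] \<open>0 < lam\<close>
    by (simp add: det_scaleR_mat1 ln_div ln_realpow)
  also have "\<dots> \<le> CARD('d) * (ln c - ln lam) + m * ln (1 + ?T / (m * c))"
    using fd_sketch_ln_det_le[OF sketch m _ \<open>0 < lam\<close>] False by (simp add: c_def right_diff_distrib)
  also have "\<dots> \<le> CARD('d) * (ln c - ln lam) + m * ln (1 + (\<Sum>s\<in>{1..t}. x s \<bullet> x s) / (m * lam))"
    using ln_trace by (simp add: mult_left_mono)
  also have "c / lam = 1 + (\<Sum>s\<in>{1..t}. \<rho> s) / lam"
    using \<open>0 < lam\<close> by (simp add: c_def field_simps)
  then have "ln c - ln lam = ln (1 + (\<Sum>s\<in>{1..t}. \<rho> s) / lam)"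
    using ln_div[of c lam] \<open>lam \<le> c\<close> \<open>0 < lam\<close> by simp
  finally show ?thesis .
qed (use \<open>0 < lam\<close> in \<open>simp add: det_scaleR_mat1\<close>)

theorem mainTheorem3:
  fixes x :: "nat \<Rightarrow> real^'d" and S :: "nat \<Rightarrow> nat \<Rightarrow> real^'d" and \<rho> :: "nat \<Rightarrow> real"
    and lam L :: real and m t :: nat
  assumes "lam > 0" and "L > 0" and "1 \<le> m" and "m \<le> CARD('d)"
    and "\<forall>s\<in>{1..t}. norm (x s) \<le> L"
    and "fd_sketch m x t S \<rho>"
  shows "ln (det ((\<Sum>s\<in>{1..t}. outer (x s) (x s)) + lam *\<^sub>R mat 1) / det (lam *\<^sub>R (mat 1 :: real^'d^'d)))
    \<le> real CARD('d) * ln (1 + (\<Sum>s\<in>{1..t}. \<rho> s) / lam)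
       + real m * ln (1 + real t * L\<^sup>2 / (real m * lam))"
proof -
  have "(\<Sum>s\<in>{1..t}. x s \<bullet> x s) / (m * lam) \<le> t * L\<^sup>2 / (m * lam)"
    using sum_inner_self_le[of "{1..t}" x L] assms(1,3,5) by (simp add: divide_right_mono)
  moreover have "0 \<le> (\<Sum>s\<in>{1..t}. x s \<bullet> x s) / (m * lam)"
    using assms(1) by (simp add: sum_nonneg)
  ultimately have "ln (1 + (\<Sum>s\<in>{1..t}. x s \<bullet> x s) / (m * lam)) \<le> ln (1 + t * L\<^sup>2 / (m * lam))"
    by simp
  then show ?thesis
    using fd_sketch_ln_det_ratio_le[OF assms(6,3,4,1)] by (meson add_left_mono mult_left_mono of_nat_0_le_iff order_trans)
qed

end
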